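(* An algebra $(S,\sqcup,\cap)$ with two binary operations is functional (isomorphic to a set of partial functions closed under override and intersection, with the operations interpreted as override and intersection) if and only if it is an ado-semilattice. In particular the functional algebras of signature $(\sqcup,\cap)$ form the finitely axiomatised variety of ado-semilattices.
   Context: For sets $X,Y$, $\mathrm{Par}(X,Y)$ is the set of partial functions from $X$ to $Y$, viewed as sets of ordered pairs. For $f,g\in\mathrm{Par}(X,Y)$, override is $f\sqcup g=f\cup(g-f)$, where $g-f$ is the restriction of $g$ to $X\setminus\mathrm{dom}(f)$; $f\cap g$ is set-theoretic intersection. An algebra $(S,\sqcup,\cap)$ is functional if it is isomorphic to $(A,\sqcup,\cap)$ for some $A\subseteq\mathrm{Par}(X,Y)$ closed under $\sqcup$ and $\cap$. An o-semilattice is an algebra $(L,\cap,\sqcup)$ such that $(L,\cap)$ is a semilattice and, with $x\leq y$ iff $x=x\cap y$, for all $x,y,z$: (i) $x\leq x\sqcup y$; (ii) $(x\cap y)\sqcup(y\cap z)\leq y$; (iii) $x\sqcup y\leq x\sqcup(y\cap(x\sqcup y))$; (iv) $x\cap z\leq(x\cap y)\sqcup z$. It is distributive if $(a\cap d)\sqcup((b\cap d)\cap(c\cap d))=((a\cap d)\sqcup(b\cap d))\cap((a\cap d)\sqcup(c\cap d))$ for all $a,b,c,d$, and associative if $\sqcup$ is associative. An ado-semilattice is an associative distributive o-semilattice. *)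

theory Defs
  imports Main
begin

definition Par :: "'x set \<Rightarrow> 'y set \<Rightarrow> ('x \<times> 'y) set set" where
  "Par X Y = {f. f \<subseteq> X \<times> Y \<and> (\<forall>x y z. (x, y) \<in> f \<longrightarrow> (x, z) \<in> f \<longrightarrow> y = z)}"

definition override :: "('x \<times> 'y) set \<Rightarrow> ('x \<times> 'y) set \<Rightarrow> ('x \<times> 'y) set" where
  "override f g = f \<union> {p \<in> g. fst p \<notin> Domain f}"

text \<open>The algebra (UNIV::'a set, join, meet) is isomorphic to some A \<subseteq> Par X Y closed under
  override and intersection (namely A = the image of the embedding h).\<close>
definition functional_in ::
  "('a \<Rightarrow> 'a \<Rightarrow> 'a) \<Rightarrow> ('a \<Rightarrow> 'a \<Rightarrow> 'a) \<Rightarrow> 'x set \<Rightarrow> 'y set \<Rightarrow> bool" where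
  "functional_in join meet X Y \<longleftrightarrow>
     (\<exists>h :: 'a \<Rightarrow> ('x \<times> 'y) set.
        inj h \<and> (\<forall>a. h a \<in> Par X Y) \<and>
        (\<forall>a b. h (join a b) = override (h a) (h b)) \<and>
        (\<forall>a b. h (meet a b) = h a \<inter> h b))"

definition oleq :: "('a \<Rightarrow> 'a \<Rightarrow> 'a) \<Rightarrow> 'a \<Rightarrow> 'a \<Rightarrow> bool" where
  "oleq meet x y \<longleftrightarrow> x = meet x y"

definition o_semilattice :: "('a \<Rightarrow> 'a \<Rightarrow> 'a) \<Rightarrow> ('a \<Rightarrow> 'a \<Rightarrow> 'a) \<Rightarrow> bool" where
  "o_semilattice join meet \<longleftrightarrow>
     (\<forall>x y z. meet (meet x y) z = meet x (meet y z)) \<and>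
     (\<forall>x y. meet x y = meet y x) \<and>
     (\<forall>x. meet x x = x) \<and>
     (\<forall>x y. oleq meet x (join x y)) \<and>
     (\<forall>x y z. oleq meet (join (meet x y) (meet y z)) y) \<and>
     (\<forall>x y. oleq meet (join x y) (join x (meet y (join x y)))) \<and>
     (\<forall>x y z. oleq meet (meet x z) (join (meet x y) z))"

definition distributive_o :: "('a \<Rightarrow> 'a \<Rightarrow> 'a) \<Rightarrow> ('a \<Rightarrow> 'a \<Rightarrow> 'a) \<Rightarrow> bool" where
  "distributive_o join meet \<longleftrightarrow>
     (\<forall>a b c d. join (meet a d) (meet (meet b d) (meet c d)) =
                meet (join (meet a d) (meet b d)) (join (meet a d) (meet c d)))"

definition ado_semilattice :: "('a \<Rightarrow> 'a \<Rightarrow> 'a) \<Rightarrow> ('a \<Rightarrow> 'a \<Rightarrow> 'a) \<Rightarrow> bool" where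
  "ado_semilattice join meet \<longleftrightarrow>
     o_semilattice join meet \<and> distributive_o join meet \<and>
     (\<forall>x y z. join (join x y) z = join x (join y z))"

end

theory Submission
  imports Defs
begin

(*
  Soundness: partial functions satisfy the ado-semilattice axioms, and an injective homomorphism
  reflects equations.

  Completeness: call a set D of elements a point if it behaves like the set of partial functions
  defined at a fixed argument t. Then u and v agree at t iff u \<sqinter> v \<in> D, so the class of x
  modulo this relation serves as the value of x at t, and x is sent to the partial map
  D \<mapsto> value of x at D, defined on the points containing x; this turns \<squnion> into override and
  \<sqinter> into intersection. For injectivity, note that the elements below a fixed a form a
  distributive lattice under \<sqinter> and \<squnion>. If x is not below y, Zorn's lemma gives a
  prime filter P below x avoiding x \<sqinter> y. Such a P plays the role of an argument t in the
  domain of x, and the elements that agree with x at t or contradict x there form a point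
  containing x but not x \<sqinter> y.
*)

section \<open>Partial maps\<close>

lemma override_upper: "f \<subseteq> override f g"
  unfolding override_def by blast

lemma override_Int_le: "override (f \<inter> g) (g \<inter> k) \<subseteq> g"
  unfolding override_def by blast

lemma override_le_override_Int: "override f g \<subseteq> override f (g \<inter> override f g)"
  unfolding override_def by blast

lemma Int_le_override_Int: "f \<in> Par X Y \<Longrightarrow> f \<inter> k \<subseteq> override (f \<inter> g) k"
  unfolding override_def Par_def by (auto simp: Domain_iff) metis

lemma override_Int_distrib: "override f (g \<inter> k) = override f g \<inter> override f k"
  unfolding override_def by blast

lemma override_assoc: "override (override f g) k = override f (override g k)"
  unfolding override_def by (auto simp: Domain_iff)

lemma ado_semilattice_if_functional_in:
  assumes "functional_in join meet X Y"
  shows "ado_semilattice join meet"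
proof -
  obtain h where "inj h" and par: "\<And>a. h a \<in> Par X Y"
    and h_join: "\<And>a b. h (join a b) = override (h a) (h b)"
    and h_meet: "\<And>a b. h (meet a b) = h a \<inter> h b"
    using assms unfolding functional_in_def by blast
  then have eqI: "\<And>a b. h a = h b \<Longrightarrow> a = b"
    by (simp add: inj_eq)
  have leI: "\<And>a b. h a \<subseteq> h b \<Longrightarrow> oleq meet a b"
    unfolding oleq_def by (rule eqI) (simp add: h_meet Int_absorb2)
  have "o_semilattice join meet"
    unfolding o_semilattice_def
    by (intro conjI allI; (rule leI | rule eqI);
        simp add: h_join h_meet Int_ac override_upper override_Int_le
          override_le_override_Int Int_le_override_Int[OF par])
  moreover have "distributive_o join meet"
    unfolding distributive_o_def
    by (intro allI, rule eqI) (simp add: h_join h_meet override_Int_distrib)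
  moreover have "\<forall>x y z. join (join x y) z = join x (join y z)"
    by (intro allI, rule eqI) (simp add: h_join override_assoc)
  ultimately show ?thesis
    unfolding ado_semilattice_def by blast
qed

definition map_inter :: "('p \<rightharpoonup> 'v) \<Rightarrow> ('p \<rightharpoonup> 'v) \<Rightarrow> ('p \<rightharpoonup> 'v)" where
  "map_inter f g = (\<lambda>p. if f p = g p then f p else None)"

lemma override_graph: "override (Map.graph f) (Map.graph g) = Map.graph (g ++ f)"
  unfolding override_def Map.graph_def by (auto simp: map_add_def split: option.splits)

lemma graph_Int: "Map.graph f \<inter> Map.graph g = Map.graph (map_inter f g)"
  unfolding map_inter_def Map.graph_def by (auto split: if_splits)

lemma graph_in_Par: "Map.graph f \<in> Par UNIV UNIV"
  unfolding Par_def Map.graph_def by auto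

lemma inj_graph: "inj Map.graph"
proof (rule injI)
  fix f g :: "'p \<rightharpoonup> 'v"
  assume "Map.graph f = Map.graph g"
  then have "f x = Some v \<longleftrightarrow> g x = Some v" for x v
    by (metis in_graphD in_graphI)
  then show "f = g"
    by (metis option.exhaust ext)
qed

lemma functional_in_if_map_embedding:
  fixes h :: "'a \<Rightarrow> ('x \<rightharpoonup> 'y)"
  assumes "inj h"
    and "\<And>a b. h (join a b) = h b ++ h a"
    and "\<And>a b. h (meet a b) = map_inter (h a) (h b)"
  shows "functional_in join meet (UNIV :: 'x set) (UNIV :: 'y set)"
  unfolding functional_in_def
proof (intro exI conjI allI)
  show "inj (Map.graph \<circ> h)"
    using assms(1) inj_graph by (rule inj_compose[rotated])
qed (simp_all add: assms(2,3) graph_in_Par override_graph graph_Int)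

section \<open>O-semilattices\<close>

locale o_semilat =
  fixes join :: "'a \<Rightarrow> 'a \<Rightarrow> 'a" (infixl "\<squnion>" 65)
    and meet :: "'a \<Rightarrow> 'a \<Rightarrow> 'a" (infixl "\<sqinter>" 70)
  assumes o_semilattice: "o_semilattice join meet"
begin

abbreviation le :: "'a \<Rightarrow> 'a \<Rightarrow> bool" (infix "\<preceq>" 50) where
  "x \<preceq> y \<equiv> oleq meet x y"

sublocale meet: semilattice_order meet le "\<lambda>x y. x \<preceq> y \<and> x \<noteq> y"
  using o_semilattice by unfold_locales (auto simp: o_semilattice_def oleq_def)

lemma
  shows join_upper1: "x \<preceq> x \<squnion> y"
    and meets_join_le: "(x \<sqinter> y) \<squnion> (y \<sqinter> z) \<preceq> y"
    and join_le_join_meet: "x \<squnion> y \<preceq> x \<squnion> (y \<sqinter> (x \<squnion> y))"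
    and meet_le_join_meet: "x \<sqinter> z \<preceq> (x \<sqinter> y) \<squnion> z"
  using o_semilattice unfolding o_semilattice_def by blast+

lemma join_least: "x \<preceq> z \<Longrightarrow> y \<preceq> z \<Longrightarrow> x \<squnion> y \<preceq> z"
  using meets_join_le[of x z y] by (simp add: meet.absorb1 meet.absorb2)

lemma join_upper2: "x \<preceq> z \<Longrightarrow> y \<preceq> z \<Longrightarrow> y \<preceq> x \<squnion> y"
  using meet_le_join_meet[of z y x] by (simp add: meet.absorb2)

lemma join_commute_bounded: "x \<preceq> z \<Longrightarrow> y \<preceq> z \<Longrightarrow> x \<squnion> y = y \<squnion> x"
  by (meson join_least join_upper1 join_upper2 meet.antisym)

lemma join_absorb1: "y \<preceq> x \<Longrightarrow> x \<squnion> y = x"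
  by (meson join_least join_upper1 meet.antisym meet.refl)

lemma join_absorb2: "x \<preceq> y \<Longrightarrow> x \<squnion> y = y"
  by (meson join_least join_upper2 meet.antisym meet.refl)

lemma join_eq_join_meet: "x \<squnion> y = x \<squnion> (y \<sqinter> (x \<squnion> y))"
  by (simp add: join_le_join_meet join_least join_upper1 meet.antisym meet.coboundedI2)

(* A point abstracts the set of partial functions defined at a fixed argument t. *)
definition point :: "'a set \<Rightarrow> bool" where
  "point D \<longleftrightarrow> (\<forall>x\<in>D. \<forall>y. x \<preceq> y \<longrightarrow> y \<in> D)
    \<and> (\<forall>u v w. u \<sqinter> v \<in> D \<longrightarrow> u \<sqinter> w \<in> D \<longrightarrow> u \<sqinter> v \<sqinter> w \<in> D)
    \<and> (\<forall>x y. x \<notin> D \<longrightarrow> (x \<squnion> y \<in> D \<longleftrightarrow> y \<in> D))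
    \<and> (\<forall>x y. x \<notin> D \<longrightarrow> y \<in> D \<longrightarrow> (x \<squnion> y) \<sqinter> y \<in> D)"

lemma
  assumes "point D"
  shows point_up: "x \<in> D \<Longrightarrow> x \<preceq> y \<Longrightarrow> y \<in> D"
    and point_meet: "u \<sqinter> v \<in> D \<Longrightarrow> u \<sqinter> w \<in> D \<Longrightarrow> u \<sqinter> v \<sqinter> w \<in> D"
    and point_join_iff: "x \<notin> D \<Longrightarrow> x \<squnion> y \<in> D \<longleftrightarrow> y \<in> D"
    and point_join_meet: "x \<notin> D \<Longrightarrow> y \<in> D \<Longrightarrow> (x \<squnion> y) \<sqinter> y \<in> D"
  using assms unfolding point_def by blast+

(* The value at t of x, represented by the elements agreeing with x at t. *)
definition value_at :: "'a set \<Rightarrow> 'a \<Rightarrow> 'a set" where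
  "value_at D x = {y. x \<sqinter> y \<in> D}"

lemma value_at_eq:
  assumes D: "point D" and "u \<sqinter> v \<in> D"
  shows "value_at D u = value_at D v"
proof -
  have "value_at D u \<subseteq> value_at D v" if "u \<sqinter> v \<in> D" for u v
  proof
    fix z
    assume "z \<in> value_at D u"
    then have "u \<sqinter> v \<sqinter> z \<in> D"
      using point_meet[OF D that] unfolding value_at_def by simp
    then show "z \<in> value_at D v"
      using point_up[OF D _ meet.mono[OF meet.cobounded2 meet.refl]] unfolding value_at_def by blast
  qed
  then show ?thesis
    using assms(2) by (metis meet.commute subset_antisym)
qed

lemma point_meet_iff:
  assumes "point D"
  shows "x \<sqinter> y \<in> D \<longleftrightarrow> x \<in> D \<and> y \<in> D \<and> value_at D x = value_at D y"
proof
  assume xy: "x \<sqinter> y \<in> D"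
  then have "value_at D x = value_at D (x \<sqinter> y)" and "value_at D (x \<sqinter> y) = value_at D y"
    using value_at_eq[OF assms, of x "x \<sqinter> y"] value_at_eq[OF assms, of "x \<sqinter> y" y] xy by simp_all
  then show "x \<in> D \<and> y \<in> D \<and> value_at D x = value_at D y"
    using xy point_up[OF assms] meet.cobounded1 meet.cobounded2 by metis
next
  assume "x \<in> D \<and> y \<in> D \<and> value_at D x = value_at D y"
  then show "x \<sqinter> y \<in> D"
    unfolding value_at_def by (metis mem_Collect_eq meet.idem)
qed

lemma value_at_meet: "point D \<Longrightarrow> x \<sqinter> y \<in> D \<Longrightarrow> value_at D (x \<sqinter> y) = value_at D x"
  using value_at_eq[of D "x \<sqinter> y" x] by (simp add: meet.commute meet.left_commute)

lemma join_in_point: "point D \<Longrightarrow> x \<in> D \<Longrightarrow> x \<squnion> y \<in> D"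
  using point_up join_upper1 by blast

lemma value_at_join_left: "point D \<Longrightarrow> x \<in> D \<Longrightarrow> value_at D (x \<squnion> y) = value_at D x"
  using value_at_eq[of D x "x \<squnion> y"] join_upper1 by (simp add: meet.absorb1)

lemma value_at_join_right:
  "point D \<Longrightarrow> x \<notin> D \<Longrightarrow> y \<in> D \<Longrightarrow> value_at D (x \<squnion> y) = value_at D y"
  using value_at_eq point_join_meet by blast

definition filter_below :: "'a \<Rightarrow> 'a set \<Rightarrow> bool" where
  "filter_below a F \<longleftrightarrow> (\<forall>x\<in>F. x \<preceq> a) \<and> a \<in> F
    \<and> (\<forall>x\<in>F. \<forall>y. x \<preceq> y \<longrightarrow> y \<preceq> a \<longrightarrow> y \<in> F) \<and> (\<forall>x\<in>F. \<forall>y\<in>F. x \<sqinter> y \<in> F)"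

definition prime_below :: "'a \<Rightarrow> 'a set \<Rightarrow> bool" where
  "prime_below a F \<longleftrightarrow> (\<forall>x y. x \<preceq> a \<longrightarrow> y \<preceq> a \<longrightarrow> x \<squnion> y \<in> F \<longrightarrow> x \<in> F \<or> y \<in> F)"

lemma
  assumes "filter_below a F"
  shows filter_below_le: "x \<in> F \<Longrightarrow> x \<preceq> a"
    and filter_below_top: "a \<in> F"
    and filter_below_up: "x \<in> F \<Longrightarrow> x \<preceq> y \<Longrightarrow> y \<preceq> a \<Longrightarrow> y \<in> F"
    and filter_below_meet: "x \<in> F \<Longrightarrow> y \<in> F \<Longrightarrow> x \<sqinter> y \<in> F"
  using assms unfolding filter_below_def by blast+

lemma prime_belowD:
  "prime_below a F \<Longrightarrow> x \<preceq> a \<Longrightarrow> y \<preceq> a \<Longrightarrow> x \<squnion> y \<in> F \<Longrightarrow> x \<in> F \<or> y \<in> F"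
  unfolding prime_below_def by blast

lemma filter_below_Union_chain:
  assumes "C \<noteq> {}" and filters: "\<And>F. F \<in> C \<Longrightarrow> filter_below a F" and "chain\<^sub>\<subseteq> C"
  shows "filter_below a (\<Union>C)"
proof -
  have "x \<sqinter> y \<in> \<Union>C" if x: "x \<in> \<Union>C" and y: "y \<in> \<Union>C" for x y
  proof -
    obtain H where "H \<in> C" "x \<in> H" "y \<in> H"
      using x y \<open>chain\<^sub>\<subseteq> C\<close> unfolding chain_subset_def by blast
    then show ?thesis
      using filters filter_below_meet by blast
  qed
  then show ?thesis
    using assms(1) filters unfolding filter_below_def by blast
qed

lemma filter_below_extend:
  assumes M: "filter_below a M" and "x \<preceq> a"
  shows "filter_below a {z. z \<preceq> a \<and> (\<exists>f\<in>M. f \<sqinter> x \<preceq> z)}" (is "filter_below a ?G")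
  unfolding filter_below_def
proof (intro conjI ballI allI impI)
  show "a \<in> ?G"
    using filter_below_top[OF M] meet.refl meet.cobounded1 by blast
next
  fix z y
  assume "z \<in> ?G" and "y \<in> ?G"
  then obtain f g where "z \<preceq> a" "f \<in> M" and fz: "f \<sqinter> x \<preceq> z" and "g \<in> M" and gy: "g \<sqinter> x \<preceq> y"
    by blast
  moreover have "(f \<sqinter> g) \<sqinter> x \<preceq> z \<sqinter> y"
    using meet.trans[OF meet.mono[OF meet.cobounded1 meet.refl] fz]
      meet.trans[OF meet.mono[OF meet.cobounded2 meet.refl] gy] by (rule meet.boundedI)
  ultimately show "z \<sqinter> y \<in> ?G"
    using filter_below_meet[OF M] meet.coboundedI1 by blast
next
  fix z y
  assume "z \<in> ?G" and "z \<preceq> y" and "y \<preceq> a"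
  then show "y \<in> ?G"
    using meet.trans by blast
qed simp

end

section \<open>Ado-semilattices\<close>

locale ado = o_semilat +
  assumes distributive: "distributive_o join meet"
    and join_assoc: "(x \<squnion> y) \<squnion> z = x \<squnion> (y \<squnion> z)"
begin

lemma join_mono_right:
  assumes "y \<preceq> z"
  shows "x \<squnion> y \<preceq> x \<squnion> z"
proof -
  have "x \<squnion> z = (x \<squnion> y) \<squnion> z"
    using assms by (simp add: join_assoc join_absorb2)
  then show ?thesis
    by (simp add: join_upper1)
qed

lemma join_mono_bounded:
  "x \<preceq> x' \<Longrightarrow> y \<preceq> y' \<Longrightarrow> x' \<preceq> d \<Longrightarrow> y' \<preceq> d \<Longrightarrow> x \<squnion> y \<preceq> x' \<squnion> y'"
  by (meson join_least join_upper1 join_upper2 meet.trans)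

lemma le_join_right_bounded: "u \<preceq> d \<Longrightarrow> x \<preceq> d \<Longrightarrow> u \<preceq> v \<Longrightarrow> u \<preceq> x \<squnion> v"
  by (meson join_mono_right join_upper2 meet.trans)

lemma join_meet_distrib_bounded:
  "a \<preceq> d \<Longrightarrow> b \<preceq> d \<Longrightarrow> c \<preceq> d \<Longrightarrow> a \<squnion> (b \<sqinter> c) = (a \<squnion> b) \<sqinter> (a \<squnion> c)"
  using distributive[unfolded distributive_o_def, rule_format, of a d b c]
  by (simp add: meet.absorb1)

lemma meet_join_distrib_bounded:
  assumes "a \<preceq> d" "b \<preceq> d" "c \<preceq> d"
  shows "a \<sqinter> (b \<squnion> c) = (a \<sqinter> b) \<squnion> (a \<sqinter> c)"
proof -
  have ab: "a \<sqinter> b \<preceq> d"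
    using assms(1) by (rule meet.coboundedI1)
  have "(a \<sqinter> b) \<squnion> (a \<sqinter> c) = ((a \<sqinter> b) \<squnion> a) \<sqinter> ((a \<sqinter> b) \<squnion> c)"
    using join_meet_distrib_bounded[OF ab assms(1,3)] .
  also have "(a \<sqinter> b) \<squnion> a = a"
    by (simp add: join_absorb2)
  also have "(a \<sqinter> b) \<squnion> c = c \<squnion> (a \<sqinter> b)"
    using join_commute_bounded[OF ab assms(3)] .
  also have "\<dots> = (c \<squnion> a) \<sqinter> (c \<squnion> b)"
    using join_meet_distrib_bounded[OF assms(3,1,2)] .
  also have "a \<sqinter> \<dots> = a \<sqinter> (c \<squnion> b)"
    using join_upper2[OF assms(3,1)] by (simp flip: meet.assoc add: meet.absorb1)
  also have "c \<squnion> b = b \<squnion> c"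
    using join_commute_bounded assms(2,3) by blast
  finally show ?thesis
    by simp
qed

lemma split_below_join:
  assumes "w \<preceq> x \<squnion> y"
  shows "w = (w \<sqinter> x) \<squnion> (w \<sqinter> y)"
proof -
  let ?y = "y \<sqinter> (x \<squnion> y)"
  have "w = w \<sqinter> (x \<squnion> ?y)"
    using assms by (simp add: meet.absorb1 flip: join_eq_join_meet)
  also have "\<dots> = (w \<sqinter> x) \<squnion> (w \<sqinter> ?y)"
    using assms by (intro meet_join_distrib_bounded[of _ "x \<squnion> y"]) (auto simp: join_upper1)
  also have "w \<sqinter> ?y = y \<sqinter> w"
    using assms by (simp add: meet.left_commute[of w] meet.absorb1)
  also have "y \<sqinter> w = w \<sqinter> y"
    by (rule meet.commute)
  finally show ?thesis .
qed

lemma split_below_join_le: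
  assumes "w \<preceq> x \<squnion> y" and "(w \<sqinter> x) \<squnion> (w \<sqinter> y) \<preceq> z"
  shows "w \<preceq> z"
  using assms(2) unfolding split_below_join[OF assms(1), symmetric] .

lemma meet_join_le: "z \<sqinter> (x \<squnion> y) \<preceq> (z \<sqinter> x) \<squnion> (z \<sqinter> y)"
proof (rule split_below_join_le)
  show "z \<sqinter> (x \<squnion> y) \<preceq> x \<squnion> y"
    by (rule meet.cobounded2)
  show "(z \<sqinter> (x \<squnion> y) \<sqinter> x) \<squnion> (z \<sqinter> (x \<squnion> y) \<sqinter> y) \<preceq> (z \<sqinter> x) \<squnion> (z \<sqinter> y)"
    by (rule join_mono_bounded[OF meet.mono[OF meet.cobounded1 meet.refl]
          meet.mono[OF meet.cobounded1 meet.refl] meet.cobounded1 meet.cobounded1])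
qed

(*
  For partial functions, a \<sqinter> x is the part of a on which x agrees with a, and
  consistent_part a x the part of a on which x does not contradict a.
*)
definition consistent_part :: "'a \<Rightarrow> 'a \<Rightarrow> 'a" where
  "consistent_part a x = a \<sqinter> (x \<squnion> a)"

lemma consistent_part_le: "consistent_part a x \<preceq> a"
  unfolding consistent_part_def by (rule meet.cobounded1)

lemma consistent_part_le_join: "consistent_part a x \<preceq> x \<squnion> a"
  unfolding consistent_part_def by (rule meet.cobounded2)

lemma le_consistent_partI: "u \<preceq> a \<Longrightarrow> u \<preceq> x \<squnion> a \<Longrightarrow> u \<preceq> consistent_part a x"
  unfolding consistent_part_def by (rule meet.boundedI)

lemma consistent_part_antimono:
  assumes "x \<preceq> x'"
  shows "consistent_part a x' \<preceq> consistent_part a x"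
proof (rule le_consistent_partI)
  show "consistent_part a x' \<preceq> x \<squnion> a"
    by (rule le_join_right_bounded[of _ "x' \<squnion> a"])
      (auto intro: meet.trans[OF assms] consistent_part_le_join consistent_part_le join_upper1)
qed (rule consistent_part_le)

lemma agree_le_consistent_part: "p \<preceq> d \<Longrightarrow> q \<preceq> d \<Longrightarrow> a \<sqinter> p \<preceq> consistent_part a q"
  by (rule le_consistent_partI, simp, rule le_join_right_bounded[of _ d])
    (auto intro: meet.coboundedI2)

lemma consistent_part_eq_self: "e \<preceq> a \<squnion> d \<Longrightarrow> consistent_part a e = a"
  unfolding consistent_part_def using join_upper2 join_upper1 by (simp add: meet.absorb1)

lemma consistent_part_meet_agree_le: "consistent_part a x \<sqinter> (a \<sqinter> y) \<preceq> a \<sqinter> (x \<squnion> y)"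
proof (rule meet.boundedI)
  show "consistent_part a x \<sqinter> (a \<sqinter> y) \<preceq> x \<squnion> y"
    by (rule le_join_right_bounded[of _ "x \<squnion> a"])
      (auto intro: meet.coboundedI1 meet.coboundedI2 consistent_part_le_join join_upper1)
qed (auto intro: meet.coboundedI1 consistent_part_le)

lemma consistent_parts_meet_le:
  "consistent_part a x \<sqinter> consistent_part a y \<preceq> consistent_part a (x \<squnion> y)"
proof (rule le_consistent_partI)
  have "consistent_part a x \<sqinter> consistent_part a y \<preceq> x \<squnion> (y \<squnion> a)"
    by (rule le_join_right_bounded[of _ "x \<squnion> a"])
      (auto intro: meet.coboundedI1 meet.coboundedI2 consistent_part_le_join join_upper1)
  then show "consistent_part a x \<sqinter> consistent_part a y \<preceq> (x \<squnion> y) \<squnion> a"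
    by (simp add: join_assoc)
qed (auto intro: meet.coboundedI1 consistent_part_le)

lemma consistent_part_join_le: "consistent_part a (x \<squnion> y) \<preceq> (a \<sqinter> x) \<squnion> consistent_part a y"
proof (rule split_below_join_le)
  let ?w = "consistent_part a (x \<squnion> y)"
  show "?w \<preceq> x \<squnion> (y \<squnion> a)"
    using consistent_part_le_join[of a "x \<squnion> y"] by (simp add: join_assoc)
  show "(?w \<sqinter> x) \<squnion> (?w \<sqinter> (y \<squnion> a)) \<preceq> (a \<sqinter> x) \<squnion> consistent_part a y"
    unfolding consistent_part_def[of a y]
    by (rule join_mono_bounded[OF meet.mono[OF consistent_part_le meet.refl]
          meet.mono[OF consistent_part_le meet.refl]])
      (rule meet.cobounded1)+
qed

lemma consistent_part_consistent_part_le: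
  assumes "x \<preceq> d"
  shows "consistent_part d (consistent_part a x) \<preceq> x \<squnion> consistent_part d a"
proof (rule split_below_join_le)
  let ?u = "consistent_part d (consistent_part a x)"
  have "x \<squnion> (consistent_part a x \<squnion> d) = x \<squnion> (a \<squnion> d)"
    by (simp add: consistent_part_def flip: join_assoc join_eq_join_meet)
  then show "?u \<preceq> x \<squnion> (a \<squnion> d)"
    using le_join_right_bounded[OF consistent_part_le assms
        consistent_part_le_join[of d "consistent_part a x"]]
    by simp
  show "(?u \<sqinter> x) \<squnion> (?u \<sqinter> (a \<squnion> d)) \<preceq> x \<squnion> consistent_part d a"
    unfolding consistent_part_def[of d a]
    by (rule join_mono_bounded[OF meet.cobounded2 meet.mono[OF consistent_part_le meet.refl] assms])
      (rule meet.cobounded1)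
qed

lemma consistent_part_meet_le:
  assumes p: "p \<preceq> d" and q: "q \<preceq> d"
  shows "consistent_part a (p \<sqinter> q) \<preceq> consistent_part a p \<squnion> consistent_part a q"
proof -
  define e where "e = consistent_part d a"
  define z where "z = consistent_part a p \<squnion> consistent_part a q"
  have e: "e \<preceq> d"
    unfolding e_def by (rule consistent_part_le)
  have z: "z \<preceq> a"
    unfolding z_def by (intro join_least consistent_part_le)
  have pz: "consistent_part a p \<preceq> z"
    unfolding z_def by (rule join_upper1)
  have qz: "consistent_part a q \<preceq> z"
    unfolding z_def by (rule join_upper2) (rule consistent_part_le)+
  have "consistent_part d z \<preceq> p \<squnion> e"
    using meet.trans[OF consistent_part_antimono[OF pz] consistent_part_consistent_part_le[OF p]]
    unfolding e_def .
  moreover have "consistent_part d z \<preceq> q \<squnion> e"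
    using meet.trans[OF consistent_part_antimono[OF qz] consistent_part_consistent_part_le[OF q]]
    unfolding e_def .
  moreover have "(p \<squnion> e) \<sqinter> (q \<squnion> e) = (p \<sqinter> q) \<squnion> e"
    using join_commute_bounded[OF p e] join_commute_bounded[OF q e]
      join_meet_distrib_bounded[OF e p q] join_commute_bounded[OF e meet.coboundedI1[OF p]]
    by simp
  ultimately have "consistent_part d z \<preceq> (p \<sqinter> q) \<squnion> e"
    using meet.boundedI by metis
  then have "consistent_part a ((p \<sqinter> q) \<squnion> e) \<preceq> z \<squnion> consistent_part a d"
    by (rule meet.trans[OF consistent_part_antimono consistent_part_consistent_part_le[OF z]])
  moreover have "z \<squnion> consistent_part a d = z"
    by (rule join_absorb1) (rule meet.trans[OF consistent_part_antimono[OF p] pz])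
  ultimately have "consistent_part a ((p \<sqinter> q) \<squnion> e) \<preceq> z"
    by simp
  moreover have "consistent_part a e = a"
    unfolding e_def by (rule consistent_part_eq_self[of _ a d]) (simp add: consistent_part_le_join)
  then have "consistent_part a (p \<sqinter> q) \<preceq> consistent_part a ((p \<sqinter> q) \<squnion> e)"
    using consistent_parts_meet_le[of a "p \<sqinter> q" e] consistent_part_le
    by (simp add: meet.absorb1)
  ultimately show ?thesis
    unfolding z_def by (rule meet.trans[rotated])
qed

lemma consistent_part_join_meet_le:
  "consistent_part a ((x \<squnion> y) \<sqinter> y) \<sqinter> consistent_part a x \<preceq> (a \<sqinter> x) \<squnion> consistent_part a y"
proof (rule split_below_join_le)
  let ?v = "(x \<squnion> y) \<sqinter> y"
  let ?u = "consistent_part a ?v \<sqinter> consistent_part a x"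
  have ua: "?u \<preceq> a"
    by (rule meet.coboundedI1) (rule consistent_part_le)
  have "x \<squnion> (?v \<squnion> a) = x \<squnion> (y \<squnion> a)"
    by (simp add: meet.commute[of "x \<squnion> y"] flip: join_assoc join_eq_join_meet)
  moreover have "?u \<preceq> x \<squnion> (?v \<squnion> a)"
    by (rule le_join_right_bounded[of _ "x \<squnion> a"])
      (auto intro: meet.coboundedI1 meet.coboundedI2 consistent_part_le_join join_upper1)
  ultimately show "?u \<preceq> x \<squnion> (y \<squnion> a)"
    by simp
  show "(?u \<sqinter> x) \<squnion> (?u \<sqinter> (y \<squnion> a)) \<preceq> (a \<sqinter> x) \<squnion> consistent_part a y"
    unfolding consistent_part_def[of a y]
    by (rule join_mono_bounded[OF meet.mono[OF ua meet.refl] meet.mono[OF ua meet.refl]])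
      (rule meet.cobounded1)+
qed

lemma prime_below_if_maximal_filter_below:
  assumes M: "filter_below a M" and "e \<preceq> a" and "e \<notin> M"
    and maximal: "\<And>F. filter_below a F \<Longrightarrow> e \<notin> F \<Longrightarrow> M \<subseteq> F \<Longrightarrow> F = M"
  shows "prime_below a M"
proof -
  have escape: "\<exists>f\<in>M. f \<sqinter> x \<preceq> e" if "x \<preceq> a" and "x \<notin> M" for x
  proof (rule ccontr)
    let ?G = "{z. z \<preceq> a \<and> (\<exists>f\<in>M. f \<sqinter> x \<preceq> z)}"
    assume "\<not> (\<exists>f\<in>M. f \<sqinter> x \<preceq> e)"
    then have "e \<notin> ?G"
      by blast
    moreover have "M \<subseteq> ?G"
      using filter_below_le[OF M] meet.cobounded1 by blast
    ultimately have "?G = M"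
      using maximal filter_below_extend[OF M \<open>x \<preceq> a\<close>] by blast
    moreover have "x \<in> ?G"
      using \<open>x \<preceq> a\<close> filter_below_top[OF M] meet.cobounded2 by blast
    ultimately show False
      using \<open>x \<notin> M\<close> by blast
  qed
  have "x \<in> M \<or> y \<in> M" if xa: "x \<preceq> a" and ya: "y \<preceq> a" and "x \<squnion> y \<in> M" for x y
  proof (rule ccontr)
    assume "\<not> (x \<in> M \<or> y \<in> M)"
    then obtain f g where f: "f \<in> M" "f \<sqinter> x \<preceq> e" and g: "g \<in> M" "g \<sqinter> y \<preceq> e"
      using escape xa ya by meson
    define h where "h = f \<sqinter> g"
    have h: "h \<in> M" "h \<sqinter> x \<preceq> e" "h \<sqinter> y \<preceq> e"
      unfolding h_def using filter_below_meet[OF M f(1) g(1)]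
        meet.trans[OF meet.mono[OF meet.cobounded1 meet.refl] f(2)]
        meet.trans[OF meet.mono[OF meet.cobounded2 meet.refl] g(2)] by blast+
    have "h \<sqinter> (x \<squnion> y) = (h \<sqinter> x) \<squnion> (h \<sqinter> y)"
      using filter_below_le[OF M h(1)] xa ya by (rule meet_join_distrib_bounded)
    then have "(h \<sqinter> x) \<squnion> (h \<sqinter> y) \<in> M"
      using filter_below_meet[OF M h(1) \<open>x \<squnion> y \<in> M\<close>] by simp
    then have "e \<in> M"
      by (rule filter_below_up[OF M _ join_least[OF h(2,3)] \<open>e \<preceq> a\<close>])
    then show False
      using \<open>e \<notin> M\<close> by blast
  qed
  then show ?thesis
    unfolding prime_below_def by blast
qed

lemma prime_filter_below_exists:
  assumes "e \<preceq> a" and "e \<noteq> a"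
  obtains P where "filter_below a P" and "prime_below a P" and "e \<notin> P"
proof -
  let ?A = "{F. filter_below a F \<and> e \<notin> F}"
  have "{a} \<in> ?A"
    using assms unfolding filter_below_def by (auto intro: meet.antisym meet.refl)
  moreover have "\<Union>C \<in> ?A" if "C \<noteq> {}" and "subset.chain ?A C" for C
  proof -
    have "C \<subseteq> ?A" and "chain\<^sub>\<subseteq> C"
      using that(2) unfolding subset_chain_def chain_subset_def by blast+
    then show ?thesis
      using filter_below_Union_chain[OF that(1)] by blast
  qed
  ultimately obtain M where "M \<in> ?A" and "\<forall>F\<in>?A. M \<subseteq> F \<longrightarrow> F = M"
    using subset_Zorn_nonempty[of ?A] by blast
  then have "filter_below a M" and "prime_below a M" and "e \<notin> M"
    using prime_below_if_maximal_filter_below[OF _ \<open>e \<preceq> a\<close>] by blast+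
  then show ?thesis
    by (rule that)
qed

(*
  If P consists of the elements below a that are defined at some argument t, this is the set of
  all elements defined at t: those agreeing with a at t or contradicting it there.
*)
definition point_of_filter :: "'a \<Rightarrow> 'a set \<Rightarrow> 'a set" where
  "point_of_filter a P = {c. a \<sqinter> c \<in> P \<or> consistent_part a c \<notin> P}"

context
  fixes a P
  assumes filter: "filter_below a P" and prime: "prime_below a P"
begin

lemma agree_in_filterI: "z \<in> P \<Longrightarrow> z \<preceq> a \<sqinter> c \<Longrightarrow> a \<sqinter> c \<in> P"
  using filter_below_up[OF filter _ _ meet.cobounded1] .

lemma consistent_part_in_filterI: "z \<in> P \<Longrightarrow> z \<preceq> consistent_part a c \<Longrightarrow> consistent_part a c \<in> P"
  using filter_below_up[OF filter _ _ consistent_part_le] .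

lemma point_of_filter_up:
  assumes "x \<in> point_of_filter a P" and "x \<preceq> y"
  shows "y \<in> point_of_filter a P"
proof (cases "a \<sqinter> x \<in> P")
  case True
  then have "a \<sqinter> y \<in> P"
    by (rule agree_in_filterI[OF _ meet.mono[OF meet.refl assms(2)]])
  then show ?thesis
    unfolding point_of_filter_def by blast
next
  case False
  then have "consistent_part a x \<notin> P"
    using assms(1) unfolding point_of_filter_def by blast
  then have "consistent_part a y \<notin> P"
    using filter_below_up[OF filter _ consistent_part_antimono[OF assms(2)] consistent_part_le]
    by blast
  then show ?thesis
    unfolding point_of_filter_def by blast
qed

lemma point_of_filter_meet_bounded:
  assumes p: "p \<preceq> d" and q: "q \<preceq> d"
    and "p \<in> point_of_filter a P" and "q \<in> point_of_filter a P"
  shows "p \<sqinter> q \<in> point_of_filter a P"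
proof -
  have p': "a \<sqinter> p \<in> P \<or> consistent_part a p \<notin> P" and q': "a \<sqinter> q \<in> P \<or> consistent_part a q \<notin> P"
    using assms(3,4) unfolding point_of_filter_def by blast+
  consider "a \<sqinter> p \<in> P" "a \<sqinter> q \<in> P" | "a \<sqinter> p \<in> P" "a \<sqinter> q \<notin> P" | "a \<sqinter> p \<notin> P" "a \<sqinter> q \<in> P"
    | "a \<sqinter> p \<notin> P" "a \<sqinter> q \<notin> P"
    by blast
  then show ?thesis
  proof cases
    case 1
    then have "(a \<sqinter> p) \<sqinter> (a \<sqinter> q) \<in> P"
      by (rule filter_below_meet[OF filter])
    then show ?thesis
      unfolding point_of_filter_def by (simp add: meet.assoc meet.left_commute)
  next
    case 2
    then show ?thesis
      using q' consistent_part_in_filterI agree_le_consistent_part[OF p q] by blast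
  next
    case 3
    then show ?thesis
      using p' consistent_part_in_filterI agree_le_consistent_part[OF q p] by blast
  next
    case 4
    then have "consistent_part a p \<notin> P" and "consistent_part a q \<notin> P"
      using p' q' by blast+
    then have "consistent_part a p \<squnion> consistent_part a q \<notin> P"
      using prime_belowD[OF prime consistent_part_le consistent_part_le] by blast
    then have "consistent_part a (p \<sqinter> q) \<notin> P"
      using filter_below_up[OF filter _ consistent_part_meet_le[OF p q]]
        join_least[OF consistent_part_le consistent_part_le] by blast
    then show ?thesis
      unfolding point_of_filter_def by blast
  qed
qed

lemma point_of_filter_join_iff:
  assumes "x \<notin> point_of_filter a P"
  shows "x \<squnion> y \<in> point_of_filter a P \<longleftrightarrow> y \<in> point_of_filter a P"
proof -
  have x: "a \<sqinter> x \<notin> P" "consistent_part a x \<in> P"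
    using assms unfolding point_of_filter_def by blast+
  have "a \<sqinter> (x \<squnion> y) \<in> P \<longleftrightarrow> a \<sqinter> y \<in> P"
  proof
    assume "a \<sqinter> (x \<squnion> y) \<in> P"
    then have "(a \<sqinter> x) \<squnion> (a \<sqinter> y) \<in> P"
      by (rule filter_below_up[OF filter _ meet_join_le
            join_least[OF meet.cobounded1 meet.cobounded1]])
    then show "a \<sqinter> y \<in> P"
      using prime_belowD[OF prime meet.cobounded1 meet.cobounded1] x(1) by blast
  next
    assume "a \<sqinter> y \<in> P"
    then show "a \<sqinter> (x \<squnion> y) \<in> P"
      using agree_in_filterI[OF filter_below_meet[OF filter x(2)] consistent_part_meet_agree_le]
      by blast
  qed
  moreover have "consistent_part a (x \<squnion> y) \<in> P \<longleftrightarrow> consistent_part a y \<in> P"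
  proof
    assume "consistent_part a (x \<squnion> y) \<in> P"
    then have "(a \<sqinter> x) \<squnion> consistent_part a y \<in> P"
      by (rule filter_below_up[OF filter _ consistent_part_join_le
            join_least[OF meet.cobounded1 consistent_part_le]])
    then show "consistent_part a y \<in> P"
      using prime_belowD[OF prime meet.cobounded1 consistent_part_le] x(1) by blast
  next
    assume "consistent_part a y \<in> P"
    then show "consistent_part a (x \<squnion> y) \<in> P"
      using consistent_part_in_filterI[OF filter_below_meet[OF filter x(2)] consistent_parts_meet_le]
      by blast
  qed
  ultimately show ?thesis
    unfolding point_of_filter_def by blast
qed

lemma point_of_filter_join_meet:
  assumes "x \<notin> point_of_filter a P" and "y \<in> point_of_filter a P"
  shows "(x \<squnion> y) \<sqinter> y \<in> point_of_filter a P"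
proof -
  have x: "a \<sqinter> x \<notin> P" "consistent_part a x \<in> P"
    using assms(1) unfolding point_of_filter_def by blast+
  from assms(2) consider "a \<sqinter> y \<in> P" | "consistent_part a y \<notin> P"
    unfolding point_of_filter_def by blast
  then show ?thesis
  proof cases
    case 1
    then have "a \<sqinter> (x \<squnion> y) \<in> P"
      using agree_in_filterI[OF filter_below_meet[OF filter x(2)] consistent_part_meet_agree_le]
      by blast
    then have "(a \<sqinter> (x \<squnion> y)) \<sqinter> (a \<sqinter> y) \<in> P"
      using 1 by (rule filter_below_meet[OF filter])
    then show ?thesis
      unfolding point_of_filter_def by (simp add: meet.assoc meet.left_commute)
  next
    case 2
    have "consistent_part a ((x \<squnion> y) \<sqinter> y) \<notin> P"
    proof
      assume "consistent_part a ((x \<squnion> y) \<sqinter> y) \<in> P"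
      then have "(a \<sqinter> x) \<squnion> consistent_part a y \<in> P"
        using filter_below_up[OF filter filter_below_meet[OF filter _ x(2)]
            consistent_part_join_meet_le
            join_least[OF meet.cobounded1 consistent_part_le]] by blast
      then show False
        using prime_belowD[OF prime meet.cobounded1 consistent_part_le] x(1) 2 by blast
    qed
    then show ?thesis
      unfolding point_of_filter_def by blast
  qed
qed

end

lemma point_point_of_filter:
  assumes "filter_below a P" and "prime_below a P"
  shows "point (point_of_filter a P)"
  unfolding point_def
proof (intro conjI allI impI ballI)
  fix u v w
  assume "u \<sqinter> v \<in> point_of_filter a P" and "u \<sqinter> w \<in> point_of_filter a P"
  then have "(u \<sqinter> v) \<sqinter> (u \<sqinter> w) \<in> point_of_filter a P"
    using point_of_filter_meet_bounded[OF assms meet.cobounded1 meet.cobounded1] by blast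
  then show "u \<sqinter> v \<sqinter> w \<in> point_of_filter a P"
    by (simp add: meet.assoc meet.left_commute)
qed (use assms point_of_filter_up point_of_filter_join_iff point_of_filter_join_meet in blast)+

lemma point_separates:
  assumes "\<not> x \<preceq> y"
  obtains D where "point D" and "x \<in> D" and "x \<sqinter> y \<notin> D"
proof -
  have "x \<sqinter> y \<noteq> x"
    using assms unfolding oleq_def by simp
  then obtain P where P: "filter_below x P" "prime_below x P" and "x \<sqinter> y \<notin> P"
    using prime_filter_below_exists[OF meet.cobounded1] by blast
  have "x \<in> P"
    using filter_below_top[OF P(1)] .
  then have "x \<in> point_of_filter x P" and "x \<sqinter> y \<notin> point_of_filter x P"
    using \<open>x \<sqinter> y \<notin> P\<close> join_absorb2[OF meet.cobounded1]
    unfolding point_of_filter_def consistent_part_def by simp_all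
  then show ?thesis
    using point_point_of_filter[OF P] that by blast
qed

(* Points and values are wrapped into singletons only to obtain the types of theorem4p10. *)
definition repr :: "'a \<Rightarrow> 'a set set \<rightharpoonup> 'a set set" where
  "repr x p = (if \<exists>D. p = {D} \<and> point D \<and> x \<in> D then Some {value_at (the_elem p) x} else None)"

lemma repr_point: "point D \<Longrightarrow> repr x {D} = (if x \<in> D then Some {value_at D x} else None)"
  unfolding repr_def by auto

lemma repr_not_point: "\<nexists>D. p = {D} \<and> point D \<Longrightarrow> repr x p = None"
  unfolding repr_def by auto

lemma repr_join: "repr (x \<squnion> y) = repr y ++ repr x"
proof
  fix p
  show "repr (x \<squnion> y) p = (repr y ++ repr x) p"
  proof (cases "\<exists>D. p = {D} \<and> point D")
    case True
    then obtain D where "p = {D}" and "point D"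
      by blast
    then show ?thesis
      by (simp add: repr_point map_add_def join_in_point value_at_join_left value_at_join_right
          point_join_iff)
  qed (simp add: repr_not_point map_add_def)
qed

lemma repr_meet: "repr (x \<sqinter> y) = map_inter (repr x) (repr y)"
proof
  fix p
  show "repr (x \<sqinter> y) p = map_inter (repr x) (repr y) p"
  proof (cases "\<exists>D. p = {D} \<and> point D")
    case True
    then obtain D where "p = {D}" and "point D"
      by blast
    then show ?thesis
      by (auto simp: repr_point map_inter_def point_meet_iff value_at_meet)
  qed (simp add: repr_not_point map_inter_def)
qed

lemma le_if_repr_eq:
  assumes "repr x = repr y"
  shows "x \<preceq> y"
proof (rule ccontr)
  assume "\<not> x \<preceq> y"
  then obtain D where D: "point D" "x \<in> D" "x \<sqinter> y \<notin> D"
    by (rule point_separates)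
  then have "repr y {D} = Some {value_at D x}"
    by (simp add: repr_point flip: assms)
  then have "y \<in> D" and "value_at D x = value_at D y"
    by (simp_all add: repr_point[OF D(1)] split: if_splits)
  then show False
    using D point_meet_iff by blast
qed

lemma inj_repr: "inj repr"
  by (rule injI) (simp add: le_if_repr_eq meet.antisym)

lemma functional_in_UNIV: "functional_in (\<squnion>) (\<sqinter>) (UNIV :: 'a set set set) (UNIV :: 'a set set set)"
  by (rule functional_in_if_map_embedding[OF inj_repr repr_join repr_meet])

end

theorem theorem4p10:
  fixes join meet :: "'a \<Rightarrow> 'a \<Rightarrow> 'a"
  shows "((\<exists>(X :: 'x set) (Y :: 'y set). functional_in join meet X Y) \<longrightarrow> ado_semilattice join meet)
       \<and> (ado_semilattice join meet \<longrightarrow>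
            (\<exists>(X :: 'a set set set) (Y :: 'a set set set). functional_in join meet X Y))"
proof (intro conjI impI)
  assume "\<exists>(X :: 'x set) (Y :: 'y set). functional_in join meet X Y"
  then show "ado_semilattice join meet"
    using ado_semilattice_if_functional_in by blast
next
  assume "ado_semilattice join meet"
  then interpret ado join meet
    unfolding ado_semilattice_def by unfold_locales blast+
  show "\<exists>(X :: 'a set set set) (Y :: 'a set set set). functional_in join meet X Y"
    using functional_in_UNIV by blast
qed

end
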